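(* Fix $\gamma\in(0,\pi/2)$ and set $v^2:=\dfrac{2\cos^2\gamma}{1+\cos^2\gamma}$ with $v>0$. Let $\mathcal U\subset\mathbb R^2$ be open, and let $T(\tau,\sigma)=\tau$ and $Y:\mathcal U\to\mathbb R^{D-1}$ be $C^2$ with $Y'^2>0$. Assume that on $\mathcal U$ $$\dot Y^2=\sin^2\gamma,\qquad Y'^2=\cos^2\gamma,\qquad (\dot Y,Y')=0 .$$ Then $(T,Y)$ satisfies the Euler–Lagrange equations of $L_{ns}$ on $\mathcal U$ if and only if $$v^2\,\ddot Y_i-Y''_i=0\qquad\text{for all } i=1,\dots,D-1 .$$
   Context: Coordinates on $\mathcal U$ are $(\tau,\sigma)$; dot and prime denote $\partial_\tau$, $\partial_\sigma$. For vectors in $\mathbb R^{D-1}$, $(\cdot,\cdot)$ is the Euclidean scalar product and $V^2=(V,V)$. Fix a constant $\rho>0$. Define $$A^2:=\dot T^2Y'^2+T'^2\dot Y^2-2\dot TT'(\dot Y,Y'),\qquad N:=\dot Y^2Y'^2-(\dot Y,Y')^2,$$ and the nonrelativistic string Lagrangian density (with $c=1$), regarded as a function of $(\dot T,T',\dot Y,Y')$ on the region $A^2>0$: $$L_{ns}:=\rho\Big[\frac{N}{2\sqrt{A^2}}-\sqrt{A^2}\Big].$$ The Euler–Lagrange equations of $L_{ns}$ are $$\partial_\tau\frac{\partial L_{ns}}{\partial\dot T}+\partial_\sigma\frac{\partial L_{ns}}{\partial T'}=0,\qquad \partial_\tau\frac{\partial L_{ns}}{\partial\dot Y^i}+\partial_\sigma\frac{\partial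 L_{ns}}{\partial Y'^i}=0\quad(i=1,\dots,D-1),$$ where the partial derivatives of $L_{ns}$ are evaluated along $(T,Y)$. *)

theory Defs
  imports "HOL-Analysis.Analysis"
begin

text \<open>Coordinates on the worldsheet are pairs (tau, sigma). Partial derivatives
  with respect to tau (dot) and sigma (prime).\<close>

definition ptau :: "(real \<times> real \<Rightarrow> 'b::real_normed_vector) \<Rightarrow> real \<times> real \<Rightarrow> 'b" where
  "ptau f x = vector_derivative (\<lambda>t. f (t, snd x)) (at (fst x))"

definition psig :: "(real \<times> real \<Rightarrow> 'b::real_normed_vector) \<Rightarrow> real \<times> real \<Rightarrow> 'b" where
  "psig f x = vector_derivative (\<lambda>s. f (fst x, s)) (at (snd x))"

definition C2_on :: "(real \<times> real) set \<Rightarrow> (real \<times> real \<Rightarrow> 'b::real_normed_vector) \<Rightarrow> bool" where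
  "C2_on U f \<longleftrightarrow>
     (\<exists>(f1 :: real \<times> real \<Rightarrow> (real \<times> real) \<Rightarrow>\<^sub>L 'b)
        (f2 :: real \<times> real \<Rightarrow> (real \<times> real) \<Rightarrow>\<^sub>L ((real \<times> real) \<Rightarrow>\<^sub>L 'b)).
        (\<forall>x\<in>U. (f has_derivative blinfun_apply (f1 x)) (at x)) \<and>
        (\<forall>x\<in>U. (f1 has_derivative blinfun_apply (f2 x)) (at x)) \<and>
        continuous_on U f2)"

text \<open>The quantities A^2, N and the nonrelativistic string Lagrangian density,
  as functions of (Tdot, T', Ydot, Y').\<close>

definition A2 :: "real \<Rightarrow> real \<Rightarrow> real^'n \<Rightarrow> real^'n \<Rightarrow> real" where
  "A2 a b p q = a\<^sup>2 * (q \<bullet> q) + b\<^sup>2 * (p \<bullet> p) - 2 * a * b * (p \<bullet> q)"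

definition Nq :: "real^'n \<Rightarrow> real^'n \<Rightarrow> real" where
  "Nq p q = (p \<bullet> p) * (q \<bullet> q) - (p \<bullet> q)\<^sup>2"

definition Lns :: "real \<Rightarrow> real \<Rightarrow> real \<Rightarrow> real^'n \<Rightarrow> real^'n \<Rightarrow> real" where
  "Lns \<rho> a b p q = \<rho> * (Nq p q / (2 * sqrt (A2 a b p q)) - sqrt (A2 a b p q))"

definition dL_dTdot :: "real \<Rightarrow> real \<Rightarrow> real \<Rightarrow> real^'n \<Rightarrow> real^'n \<Rightarrow> real" where
  "dL_dTdot \<rho> a b p q = deriv (\<lambda>a'. Lns \<rho> a' b p q) a"

definition dL_dTprime :: "real \<Rightarrow> real \<Rightarrow> real \<Rightarrow> real^'n \<Rightarrow> real^'n \<Rightarrow> real" where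
  "dL_dTprime \<rho> a b p q = deriv (\<lambda>b'. Lns \<rho> a b' p q) b"

definition dL_dYdot :: "real \<Rightarrow> 'n \<Rightarrow> real \<Rightarrow> real \<Rightarrow> real^'n \<Rightarrow> real^'n \<Rightarrow> real" where
  "dL_dYdot \<rho> i a b p q = deriv (\<lambda>s. Lns \<rho> a b (p + s *\<^sub>R axis i 1) q) 0"

definition dL_dYprime :: "real \<Rightarrow> 'n \<Rightarrow> real \<Rightarrow> real \<Rightarrow> real^'n \<Rightarrow> real^'n \<Rightarrow> real" where
  "dL_dYprime \<rho> i a b p q = deriv (\<lambda>s. Lns \<rho> a b p (q + s *\<^sub>R axis i 1)) 0"

definition EL_ns :: "real \<Rightarrow> (real \<times> real) set \<Rightarrow> (real \<times> real \<Rightarrow> real) \<Rightarrow> (real \<times> real \<Rightarrow> real^'n) \<Rightarrow> bool" where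
  "EL_ns \<rho> U T Y \<longleftrightarrow>
     (\<forall>x\<in>U.
        ptau (\<lambda>y. dL_dTdot \<rho> (ptau T y) (psig T y) (ptau Y y) (psig Y y)) x
      + psig (\<lambda>y. dL_dTprime \<rho> (ptau T y) (psig T y) (ptau Y y) (psig Y y)) x = 0
      \<and> (\<forall>i. ptau (\<lambda>y. dL_dYdot \<rho> i (ptau T y) (psig T y) (ptau Y y) (psig Y y)) x
            + psig (\<lambda>y. dL_dYprime \<rho> i (ptau T y) (psig T y) (ptau Y y) (psig Y y)) x = 0))"

end

theory Submission
  imports Defs
begin

text \<open>In the static gauge \<open>T = \<tau>\<close> one has \<open>\<partial>\<^sub>\<tau>T = 1\<close>, \<open>\<partial>\<^sub>\<sigma>T = 0\<close>, hence \<open>A\<^sup>2 = Y'\<^sup>2\<close>.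
  Under the hypotheses the Gram data \<open>(\<partial>\<^sub>\<tau>Y\<^sup>2, Y'\<^sup>2, (\<partial>\<^sub>\<tau>Y, Y'))\<close> is constant on \<open>U\<close>, so the
  \<open>T\<close>-momenta are constant and the \<open>T\<close>-equation holds automatically, while the \<open>Y\<close>-momenta
  are \<open>\<rho> cos \<gamma> \<partial>\<^sub>\<tau>Y\<close> and \<open>-\<rho> (1 + cos\<^sup>2 \<gamma>) / (2 cos \<gamma>) Y'\<close>. The \<open>Y\<close>-equations are
  therefore a nonzero multiple of \<open>v\<^sup>2 \<partial>\<^sub>\<tau>\<^sub>\<tau>Y - Y''\<close>.\<close>

lemma vector_derivative_cong_open:
  assumes "open U" "continuous_on UNIV g" "g t \<in> U" "\<forall>y\<in>U. f y = h y"
  shows "vector_derivative (\<lambda>s. f (g s)) (at t) = vector_derivative (\<lambda>s. h (g s)) (at t)"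
proof -
  have "\<forall>\<^sub>F s in nhds t. s \<in> g -` U"
    using assms(1-3) by (intro eventually_nhds_in_open open_vimage) auto
  then have "\<forall>\<^sub>F s in nhds t. s \<in> UNIV \<longrightarrow> f (g s) = h (g s)"
    by eventually_elim (use assms(4) in auto)
  then show ?thesis
    by (rule vector_derivative_cong_eq) auto
qed

lemma vector_derivative_chain_has_derivative:
  assumes "(g has_vector_derivative v) (at t)" "(F has_derivative F') (at (g t))"
  shows "vector_derivative (\<lambda>s. F (g s)) (at t) = F' v"
  using vector_derivative_diff_chain_within[OF assms(1) has_derivative_subset[OF assms(2)]]
  by (simp add: o_def vector_derivative_at)

lemma ptau_has_derivative:
  assumes "(F has_derivative F') (at x)"
  shows "ptau F x = F' (1, 0)"
proof -
  have "((\<lambda>t. (t, snd x)) has_vector_derivative (1, 0)) (at (fst x))"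
    by (auto simp: has_vector_derivative_def intro!: derivative_eq_intros)
  moreover have "(F has_derivative F') (at ((\<lambda>t. (t, snd x)) (fst x)))"
    using assms by simp
  ultimately show ?thesis
    unfolding ptau_def by (rule vector_derivative_chain_has_derivative)
qed

lemma psig_has_derivative:
  assumes "(F has_derivative F') (at x)"
  shows "psig F x = F' (0, 1)"
proof -
  have "((\<lambda>s. (fst x, s)) has_vector_derivative (0, 1)) (at (snd x))"
    by (auto simp: has_vector_derivative_def intro!: derivative_eq_intros)
  moreover have "(F has_derivative F') (at ((\<lambda>s. (fst x, s)) (snd x)))"
    using assms by simp
  ultimately show ?thesis
    unfolding psig_def by (rule vector_derivative_chain_has_derivative)
qed

lemma ptau_cong_open:
  assumes "open U" "x \<in> U" "\<forall>y\<in>U. f y = g y"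
  shows "ptau f x = ptau g x"
  unfolding ptau_def using assms
  by (intro vector_derivative_cong_open[where U = U]) (simp_all add: continuous_on_Pair)

lemma psig_cong_open:
  assumes "open U" "x \<in> U" "\<forall>y\<in>U. f y = g y"
  shows "psig f x = psig g x"
  unfolding psig_def using assms
  by (intro vector_derivative_cong_open[where U = U]) (simp_all add: continuous_on_Pair)

lemma ptau_locally_constant:
  assumes "open U" "x \<in> U" "\<forall>y\<in>U. f y = f x"
  shows "ptau f x = 0"
  using ptau_cong_open[OF assms] by (simp add: ptau_def)

lemma psig_locally_constant:
  assumes "open U" "x \<in> U" "\<forall>y\<in>U. f y = f x"
  shows "psig f x = 0"
  using psig_cong_open[OF assms] by (simp add: psig_def)

lemma ptau_scaled_nth:
  fixes F :: "real \<times> real \<Rightarrow> real^'n"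
  assumes "F differentiable (at x)"
  shows "ptau (\<lambda>y. k * F y $ i) x = k * ptau F x $ i"
proof -
  obtain F' where F': "(F has_derivative F') (at x)"
    using assms differentiable_def by blast
  have "((\<lambda>y. k * F y $ i) has_derivative (\<lambda>h. k * F' h $ i)) (at x)"
    using bounded_linear.has_derivative[OF bounded_linear_vec_nth[of i] F']
    by (rule has_derivative_mult_right)
  then show ?thesis
    using F' by (simp add: ptau_has_derivative)
qed

lemma psig_scaled_nth:
  fixes F :: "real \<times> real \<Rightarrow> real^'n"
  assumes "F differentiable (at x)"
  shows "psig (\<lambda>y. k * F y $ i) x = k * psig F x $ i"
proof -
  obtain F' where F': "(F has_derivative F') (at x)"
    using assms differentiable_def by blast
  have "((\<lambda>y. k * F y $ i) has_derivative (\<lambda>h. k * F' h $ i)) (at x)"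
    using bounded_linear.has_derivative[OF bounded_linear_vec_nth[of i] F']
    by (rule has_derivative_mult_right)
  then show ?thesis
    using F' by (simp add: psig_has_derivative)
qed

lemma ptau_fst [simp]: "ptau fst x = 1"
  using ptau_has_derivative[OF has_derivative_fst[OF has_derivative_ident]] by simp

lemma psig_fst [simp]: "psig fst x = 0"
  using psig_has_derivative[OF has_derivative_fst[OF has_derivative_ident]] by simp

lemma C2_on_partials_differentiable:
  fixes Y :: "real \<times> real \<Rightarrow> 'b::real_normed_vector"
  assumes "C2_on U Y" "open U" "x \<in> U"
  shows "ptau Y differentiable (at x)" "psig Y differentiable (at x)"
proof -
  obtain f1 :: "real \<times> real \<Rightarrow> (real \<times> real) \<Rightarrow>\<^sub>L 'b"
    and f2 :: "real \<times> real \<Rightarrow> (real \<times> real) \<Rightarrow>\<^sub>L ((real \<times> real) \<Rightarrow>\<^sub>L 'b)"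
    where f1: "\<forall>y\<in>U. (Y has_derivative blinfun_apply (f1 y)) (at y)"
      and f2: "\<forall>y\<in>U. (f1 has_derivative blinfun_apply (f2 y)) (at y)"
    using assms(1) unfolding C2_on_def by blast
  have f1_deriv: "((\<lambda>y. f1 y v) has_derivative (\<lambda>h. f2 x h v)) (at x)" for v
    using bounded_bilinear.FDERIV[OF bounded_bilinear_blinfun_apply
        f2[rule_format, OF assms(3)] has_derivative_const[of v]]
    by simp
  have "(ptau Y has_derivative (\<lambda>h. f2 x h (1, 0))) (at x)"
    by (rule has_derivative_transform_within_open[OF f1_deriv assms(2,3)])
      (simp add: ptau_has_derivative[OF f1[rule_format]])
  moreover have "(psig Y has_derivative (\<lambda>h. f2 x h (0, 1))) (at x)"
    by (rule has_derivative_transform_within_open[OF f1_deriv assms(2,3)])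
      (simp add: psig_has_derivative[OF f1[rule_format]])
  ultimately show "ptau Y differentiable (at x)" "psig Y differentiable (at x)"
    unfolding differentiable_def by blast+
qed

lemma Lns_inner_cong:
  assumes "p \<bullet> p = p' \<bullet> p'" "q \<bullet> q = q' \<bullet> q'" "p \<bullet> q = p' \<bullet> q'"
  shows "Lns \<rho> a b p q = Lns \<rho> a b p' q'"
  unfolding Lns_def A2_def Nq_def assms ..

lemma dL_dTdot_inner_cong:
  assumes "p \<bullet> p = p' \<bullet> p'" "q \<bullet> q = q' \<bullet> q'" "p \<bullet> q = p' \<bullet> q'"
  shows "dL_dTdot \<rho> a b p q = dL_dTdot \<rho> a b p' q'"
  unfolding dL_dTdot_def Lns_inner_cong[OF assms] ..

lemma dL_dTprime_inner_cong:
  assumes "p \<bullet> p = p' \<bullet> p'" "q \<bullet> q = q' \<bullet> q'" "p \<bullet> q = p' \<bullet> q'"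
  shows "dL_dTprime \<rho> a b p q = dL_dTprime \<rho> a b p' q'"
  unfolding dL_dTprime_def Lns_inner_cong[OF assms] ..

lemma dL_dYdot_orthogonal:
  fixes p q :: "real^'n"
  assumes "p \<bullet> q = 0" "q \<bullet> q > 0"
  shows "dL_dYdot \<rho> i 1 0 p q = \<rho> * sqrt (q \<bullet> q) * p $ i"
proof -
  define P Q where "P = p \<bullet> p" and "Q = q \<bullet> q"
  have "(\<lambda>s. Lns \<rho> 1 0 (p + s *\<^sub>R axis i 1) q) =
      (\<lambda>s. \<rho> * (((P + 2 * s * p $ i + s\<^sup>2) * Q - (s * q $ i)\<^sup>2) / (2 * sqrt Q) - sqrt Q))"
    using assms(1) by (auto simp: Lns_def Nq_def A2_def P_def[symmetric] Q_def[symmetric]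
        inner_axis inner_axis' inner_commute power2_eq_square algebra_simps)
  moreover have "((\<lambda>s. \<rho> * (((P + 2 * s * p $ i + s\<^sup>2) * Q - (s * q $ i)\<^sup>2) / (2 * sqrt Q) - sqrt Q))
      has_real_derivative \<rho> * sqrt Q * p $ i) (at 0)"
    using assms(2) unfolding Q_def[symmetric] by (auto intro!: derivative_eq_intros simp: field_simps)
  ultimately show ?thesis
    unfolding dL_dYdot_def Q_def by (simp add: DERIV_imp_deriv)
qed

lemma dL_dYprime_orthogonal:
  fixes p q :: "real^'n"
  assumes "p \<bullet> q = 0" "q \<bullet> q > 0"
  shows "dL_dYprime \<rho> i 1 0 p q = \<rho> * (p \<bullet> p / 2 - 1) / sqrt (q \<bullet> q) * q $ i"
proof -
  define P Q where "P = p \<bullet> p" and "Q = q \<bullet> q"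
  define A where "A s = Q + 2 * s * q $ i + s\<^sup>2" for s
  have "(\<lambda>s. Lns \<rho> 1 0 p (q + s *\<^sub>R axis i 1)) =
      (\<lambda>s. \<rho> * ((P * A s - (s * p $ i)\<^sup>2) / (2 * sqrt (A s)) - sqrt (A s)))"
    using assms(1) by (auto simp: Lns_def Nq_def A2_def A_def P_def[symmetric] Q_def[symmetric]
        inner_axis inner_axis' inner_commute power2_eq_square algebra_simps)
  moreover have "((\<lambda>s. \<rho> * ((P * A s - (s * p $ i)\<^sup>2) / (2 * sqrt (A s)) - sqrt (A s)))
      has_real_derivative \<rho> * (P / 2 - 1) / sqrt Q * q $ i) (at 0)"
    using assms(2) unfolding Q_def[symmetric] A_def
    by (auto intro!: derivative_eq_intros simp: field_simps power2_eq_square[symmetric])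
  ultimately show ?thesis
    unfolding dL_dYprime_def P_def Q_def by (simp add: DERIV_imp_deriv)
qed

lemma EL_ns_fst_iff_orthogonal_constant_gram:
  fixes Y :: "real \<times> real \<Rightarrow> real^'n"
  assumes "open U" "C2_on U Y" "Q > 0"
    and "\<forall>x\<in>U. ptau Y x \<bullet> ptau Y x = P"
    and "\<forall>x\<in>U. psig Y x \<bullet> psig Y x = Q"
    and "\<forall>x\<in>U. ptau Y x \<bullet> psig Y x = 0"
  shows "EL_ns \<rho> U fst Y \<longleftrightarrow>
    (\<forall>x\<in>U. \<forall>i. \<rho> * sqrt Q * ptau (ptau Y) x $ i + \<rho> * (P / 2 - 1) / sqrt Q * psig (psig Y) x $ i = 0)"
proof -
  have T_equation:
    "ptau (\<lambda>y. dL_dTdot \<rho> (ptau fst y) (psig fst y) (ptau Y y) (psig Y y)) x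
      + psig (\<lambda>y. dL_dTprime \<rho> (ptau fst y) (psig fst y) (ptau Y y) (psig Y y)) x = 0"
    if "x \<in> U" for x
  proof -
    have "\<forall>y\<in>U. dL_dTdot \<rho> 1 0 (ptau Y y) (psig Y y) = dL_dTdot \<rho> 1 0 (ptau Y x) (psig Y x)"
      and "\<forall>y\<in>U. dL_dTprime \<rho> 1 0 (ptau Y y) (psig Y y) = dL_dTprime \<rho> 1 0 (ptau Y x) (psig Y x)"
      using assms(4-6) that by (auto intro!: dL_dTdot_inner_cong dL_dTprime_inner_cong)
    then show ?thesis
      by (simp add: ptau_locally_constant[OF assms(1) that] psig_locally_constant[OF assms(1) that])
  qed
  have Ydot_momentum:
    "\<forall>y\<in>U. dL_dYdot \<rho> i 1 0 (ptau Y y) (psig Y y) = (\<rho> * sqrt Q) * ptau Y y $ i" for i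
    using assms(3,5,6) by (simp add: dL_dYdot_orthogonal)
  have Y'_momentum:
    "\<forall>y\<in>U. dL_dYprime \<rho> i 1 0 (ptau Y y) (psig Y y) = (\<rho> * (P / 2 - 1) / sqrt Q) * psig Y y $ i" for i
    using assms(3-6) by (simp add: dL_dYprime_orthogonal)
  have Y_equation:
    "ptau (\<lambda>y. dL_dYdot \<rho> i (ptau fst y) (psig fst y) (ptau Y y) (psig Y y)) x
      + psig (\<lambda>y. dL_dYprime \<rho> i (ptau fst y) (psig fst y) (ptau Y y) (psig Y y)) x
     = \<rho> * sqrt Q * ptau (ptau Y) x $ i + \<rho> * (P / 2 - 1) / sqrt Q * psig (psig Y) x $ i"
    if "x \<in> U" for x i
  proof -
    note Y_differentiable = C2_on_partials_differentiable[OF assms(2,1) that]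
    have "ptau (\<lambda>y. dL_dYdot \<rho> i (ptau fst y) (psig fst y) (ptau Y y) (psig Y y)) x
        = \<rho> * sqrt Q * ptau (ptau Y) x $ i"
      using ptau_cong_open[OF assms(1) that Ydot_momentum]
        ptau_scaled_nth[OF Y_differentiable(1), of "\<rho> * sqrt Q" i] by simp
    moreover have "psig (\<lambda>y. dL_dYprime \<rho> i (ptau fst y) (psig fst y) (ptau Y y) (psig Y y)) x
        = \<rho> * (P / 2 - 1) / sqrt Q * psig (psig Y) x $ i"
      using psig_cong_open[OF assms(1) that Y'_momentum]
        psig_scaled_nth[OF Y_differentiable(2), of "\<rho> * (P / 2 - 1) / sqrt Q" i] by simp
    ultimately show ?thesis
      by simp
  qed
  show ?thesis
    unfolding EL_ns_def using T_equation Y_equation by simp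
qed

lemma momentum_balance_iff_wave_equation:
  fixes \<rho> c s a b :: real
  assumes "\<rho> \<noteq> 0" "c > 0" "s\<^sup>2 + c\<^sup>2 = 1"
  shows "\<rho> * c * a + \<rho> * (s\<^sup>2 / 2 - 1) / c * b = 0 \<longleftrightarrow> 2 * c\<^sup>2 / (1 + c\<^sup>2) * a - b = 0"
proof -
  define d where "d = 1 + c\<^sup>2"
  define \<kappa> where "\<kappa> = \<rho> * d / (2 * c)"
  have "d > 0"
    unfolding d_def by (simp add: add_pos_nonneg)
  then have "\<kappa> \<noteq> 0"
    unfolding \<kappa>_def using assms(1,2) by simp
  have \<kappa>_v2: "\<kappa> * (2 * c\<^sup>2 / d) = \<rho> * c"
    unfolding \<kappa>_def using assms(2) \<open>d > 0\<close> by (simp add: field_simps power2_eq_square)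
  have \<kappa>_Y': "\<rho> * (s\<^sup>2 / 2 - 1) / c = - \<kappa>"
  proof -
    have s2: "s\<^sup>2 = 1 - c\<^sup>2"
      using assms(3) by simp
    show ?thesis
      unfolding \<kappa>_def d_def s2 using assms(2) by (simp add: field_simps)
  qed
  have "\<rho> * c * a + \<rho> * (s\<^sup>2 / 2 - 1) / c * b = \<kappa> * (2 * c\<^sup>2 / d * a - b)"
    unfolding \<kappa>_Y' \<kappa>_v2[symmetric] by (simp add: algebra_simps)
  with \<open>\<kappa> \<noteq> 0\<close> show ?thesis
    unfolding d_def by simp
qed

theorem mainTheorem5:
  fixes \<rho> \<gamma> :: real and U :: "(real \<times> real) set" and Y :: "real \<times> real \<Rightarrow> real^'n"
  assumes "\<rho> > 0"
    and "0 < \<gamma>" and "\<gamma> < pi / 2"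
    and "open U"
    and "C2_on U Y"
    and "\<forall>x\<in>U. psig Y x \<bullet> psig Y x > 0"
    and "\<forall>x\<in>U. ptau Y x \<bullet> ptau Y x = (sin \<gamma>)\<^sup>2"
    and "\<forall>x\<in>U. psig Y x \<bullet> psig Y x = (cos \<gamma>)\<^sup>2"
    and "\<forall>x\<in>U. ptau Y x \<bullet> psig Y x = 0"
  shows "EL_ns \<rho> U (\<lambda>x. fst x) Y \<longleftrightarrow>
         (\<forall>x\<in>U. \<forall>i. (2 * (cos \<gamma>)\<^sup>2 / (1 + (cos \<gamma>)\<^sup>2)) * (ptau (ptau Y) x $ i)
                       - psig (psig Y) x $ i = 0)"
proof -
  have "\<rho> \<noteq> 0"
    using assms(1) by simp
  have cos_pos: "cos \<gamma> > 0"
    using assms(2,3) by (intro cos_gt_zero) auto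
  then have "EL_ns \<rho> U fst Y \<longleftrightarrow>
      (\<forall>x\<in>U. \<forall>i. \<rho> * cos \<gamma> * ptau (ptau Y) x $ i
                  + \<rho> * ((sin \<gamma>)\<^sup>2 / 2 - 1) / cos \<gamma> * psig (psig Y) x $ i = 0)"
    using EL_ns_fst_iff_orthogonal_constant_gram[OF assms(4,5) _ assms(7-9)] by simp
  then show ?thesis
    unfolding momentum_balance_iff_wave_equation[OF \<open>\<rho> \<noteq> 0\<close> cos_pos sin_cos_squared_add] .
qed

end
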